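(* There exist two MatP instances $I_A,I_B$ with the same underlying graph, differing only by a single swap in the preference order of one agent, such that a robust popular matching with respect to $I_A$ and $I_B$ exists but no robust dominant matching exists; in particular, a maximum-size robust popular matching need not be robust dominant. Concretely: $W=\{w_1,w_2,w_3\}$, $F=\{f_1,f_2,f_3\}$; in $I_A$: $w_1: f_1\succ f_3$, $w_2: f_1\succ f_2$, $w_3: f_3$; in $I_B$ the same except $w_1: f_3\succ f_1$; in both: $f_1: w_2\succ w_1$, $f_2: w_2$, $f_3: w_1\succ w_3$ (edges are exactly the pairs appearing in these lists). Then $\{\{w_1,f_3\},\{w_2,f_1\}\}$ is the unique robust popular matching and there is no robust dominant matching.
   Context: An instance $I$ of matchings under preferences (MatP) consists of a bipartite graph $G^I=(W\cup F,E^I)$ with disjoint finite vertex sets $W$ (workers) and $F$ (firms), whose elements are called agents, together with, for each agent $x$, a strict linear order $\succ_x^I$ over the set $N_x^I$ of neighbors of $x$ in $G^I$. A matching is a set of pairwise disjoint edges; $M(x)$ denotes the partner of a matched agent $x$. Agent $x$ prefers $M$ over $M'$ if $x$ is matched in $M$ and unmatched in $M'$, or matched in both with $M(x)\succ_x M'(x)$. Define $\mathrm{vote}^I_x(M,M')=1$ if $x$ prefers $M$ over $M'$, $-1$ if $x$ prefers $M'$ over $M$, and $0$ otherwise, and $\phi^I(M,M')=\sum_{x\in W\cup F}\mathrm{vote}^I_x(M,M')$. A matching $M$ of $G^I$ is popular for $I$ if $\phi^I(M,M')\ge 0$ for every matching $M'$ of $G^I$; it is dominant for $I$ if it is popular and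 $\phi^I(M,M')>0$ for every matching $M'$ of $G^I$ with $|M'|>|M|$. A matching is robust popular (resp. robust dominant) with respect to $I_A,I_B$ if it is popular (resp. dominant) for both. *)

theory Defs
  imports Main
begin

text \<open>A MatP instance: workers W, firms F, edge set E (edges as 2-element sets {w,f}),
  and for every agent x a strict preference relation: pref x a b means a is strictly
  preferred to b by x.\<close>

record 'a matp =
  Wk :: "'a set"
  Fm :: "'a set"
  Ed :: "'a set set"
  pref :: "'a \<Rightarrow> 'a \<Rightarrow> 'a \<Rightarrow> bool"

definition neighbors :: "'a matp \<Rightarrow> 'a \<Rightarrow> 'a set" where
  "neighbors I x = {y. {x, y} \<in> Ed I}"

definition strict_linear_on :: "'a set \<Rightarrow> ('a \<Rightarrow> 'a \<Rightarrow> bool) \<Rightarrow> bool" where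
  "strict_linear_on S R \<longleftrightarrow>
     (\<forall>a b. R a b \<longrightarrow> a \<in> S \<and> b \<in> S) \<and>
     (\<forall>a\<in>S. \<not> R a a) \<and>
     (\<forall>a\<in>S. \<forall>b\<in>S. \<forall>c\<in>S. R a b \<longrightarrow> R b c \<longrightarrow> R a c) \<and>
     (\<forall>a\<in>S. \<forall>b\<in>S. a \<noteq> b \<longrightarrow> R a b \<or> R b a)"

definition matp_instance :: "'a matp \<Rightarrow> bool" where
  "matp_instance I \<longleftrightarrow>
     finite (Wk I) \<and> finite (Fm I) \<and> Wk I \<inter> Fm I = {} \<and>
     Ed I \<subseteq> {{w, f} | w f. w \<in> Wk I \<and> f \<in> Fm I} \<and>
     (\<forall>x \<in> Wk I \<union> Fm I. strict_linear_on (neighbors I x) (pref I x))"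

definition is_matching :: "'a matp \<Rightarrow> 'a set set \<Rightarrow> bool" where
  "is_matching I M \<longleftrightarrow> M \<subseteq> Ed I \<and> (\<forall>e\<in>M. \<forall>e'\<in>M. e \<noteq> e' \<longrightarrow> e \<inter> e' = {})"

definition matched :: "'a set set \<Rightarrow> 'a \<Rightarrow> bool" where
  "matched M x \<longleftrightarrow> (\<exists>y. {x, y} \<in> M)"

definition partner :: "'a set set \<Rightarrow> 'a \<Rightarrow> 'a" where
  "partner M x = (THE y. {x, y} \<in> M)"

definition prefers :: "'a matp \<Rightarrow> 'a \<Rightarrow> 'a set set \<Rightarrow> 'a set set \<Rightarrow> bool" where
  "prefers I x M M' \<longleftrightarrow>
     (matched M x \<and> \<not> matched M' x) \<or>
     (matched M x \<and> matched M' x \<and> pref I x (partner M x) (partner M' x))"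

definition vote :: "'a matp \<Rightarrow> 'a \<Rightarrow> 'a set set \<Rightarrow> 'a set set \<Rightarrow> int" where
  "vote I x M M' = (if prefers I x M M' then 1 else if prefers I x M' M then -1 else 0)"

definition phi :: "'a matp \<Rightarrow> 'a set set \<Rightarrow> 'a set set \<Rightarrow> int" where
  "phi I M M' = (\<Sum>x \<in> Wk I \<union> Fm I. vote I x M M')"

definition popular :: "'a matp \<Rightarrow> 'a set set \<Rightarrow> bool" where
  "popular I M \<longleftrightarrow> is_matching I M \<and> (\<forall>M'. is_matching I M' \<longrightarrow> phi I M M' \<ge> 0)"

definition dominant :: "'a matp \<Rightarrow> 'a set set \<Rightarrow> bool" where
  "dominant I M \<longleftrightarrow> popular I M \<and>
     (\<forall>M'. is_matching I M' \<longrightarrow> card M' > card M \<longrightarrow> phi I M M' > 0)"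

definition robust_popular :: "'a matp \<Rightarrow> 'a matp \<Rightarrow> 'a set set \<Rightarrow> bool" where
  "robust_popular IA IB M \<longleftrightarrow> popular IA M \<and> popular IB M"

definition robust_dominant :: "'a matp \<Rightarrow> 'a matp \<Rightarrow> 'a set set \<Rightarrow> bool" where
  "robust_dominant IA IB M \<longleftrightarrow> dominant IA M \<and> dominant IB M"

definition list_pref :: "'a list \<Rightarrow> 'a \<Rightarrow> 'a \<Rightarrow> bool" where
  "list_pref L a b \<longleftrightarrow> (\<exists>xs ys. L = xs @ a # ys \<and> b \<in> set ys)"

datatype agent = w1 | w2 | w3 | f1 | f2 | f3

fun prefA_list :: "agent \<Rightarrow> agent list" where
  "prefA_list w1 = [f1, f3]"
| "prefA_list w2 = [f1, f2]"
| "prefA_list w3 = [f3]"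
| "prefA_list f1 = [w2, w1]"
| "prefA_list f2 = [w2]"
| "prefA_list f3 = [w1, w3]"

fun prefB_list :: "agent \<Rightarrow> agent list" where
  "prefB_list w1 = [f3, f1]"
| "prefB_list x = prefA_list x"

definition ex_edges :: "agent set set" where
  "ex_edges = {{w, f} | w f. w \<in> {w1, w2, w3} \<and> f \<in> set (prefA_list w)}"

definition IA :: "agent matp" where
  "IA = \<lparr>Wk = {w1, w2, w3}, Fm = {f1, f2, f3}, Ed = ex_edges,
         pref = (\<lambda>x. list_pref (prefA_list x))\<rparr>"

definition IB :: "agent matp" where
  "IB = \<lparr>Wk = {w1, w2, w3}, Fm = {f1, f2, f3}, Ed = ex_edges,
         pref = (\<lambda>x. list_pref (prefB_list x))\<rparr>"

end

theory Submission imports Defs begin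

text \<open>The example graph has five edges and only thirteen matchings, so everything reduces to
  finitely many vote counts. Every matching other than M_robust = {w1 f3, w2 f1} loses a
  head-to-head election under IA or IB, while M_robust loses none under either. It is not
  dominant for IA: the larger perfect matching {w1 f1, w2 f2, w3 f3} ties with it, being
  preferred by w1, w3, f2 and rejected by w2, f1, f3.\<close>

lemma list_pref_doubleton [simp]: "list_pref [x, y] a b \<longleftrightarrow> a = x \<and> b = y"
  unfolding list_pref_def
  by (auto simp: Cons_eq_append_conv append_eq_Cons_conv intro: exI[of _ "[]"])

lemma list_pref_singleton [simp]: "\<not> list_pref [x] a b"
  unfolding list_pref_def by (auto simp: Cons_eq_append_conv append_eq_Cons_conv)

lemma ex_edges_eq: "ex_edges = {{w1, f1}, {w1, f3}, {w2, f1}, {w2, f2}, {w3, f3}}"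
proof -
  have "ex_edges = (\<Union>w\<in>{w1, w2, w3}. (\<lambda>f. {w, f}) ` set (prefA_list w))"
    unfolding ex_edges_def by blast
  then show ?thesis by (simp add: insert_commute)
qed

definition ex_matchings :: "agent set set set" where
  "ex_matchings = {{}, {{w1, f1}}, {{w1, f3}}, {{w2, f1}}, {{w2, f2}}, {{w3, f3}},
     {{w1, f1}, {w2, f2}}, {{w1, f1}, {w3, f3}}, {{w1, f3}, {w2, f1}}, {{w1, f3}, {w2, f2}},
     {{w2, f1}, {w3, f3}}, {{w2, f2}, {w3, f3}}, {{w1, f1}, {w2, f2}, {w3, f3}}}"

definition M_robust :: "agent set set" where
  "M_robust = {{w1, f3}, {w2, f1}}"

definition M_perfect :: "agent set set" where
  "M_perfect = {{w1, f1}, {w2, f2}, {w3, f3}}"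

lemma matching_in_ex_matchings:
  assumes edges: "Ed I = ex_edges" and M: "is_matching I M"
  shows "M \<in> ex_matchings"
proof -
  have disjoint: "e \<inter> e' = {}" if "e \<in> M" "e' \<in> M" "e \<noteq> e'" for e e'
    using M that unfolding is_matching_def by blast
  have "M \<subseteq> ex_edges"
    using M edges unfolding is_matching_def by simp
  then have "M = {{w1, f1}, {w1, f3}, {w2, f1}, {w2, f2}, {w3, f3}} \<inter> M"
    unfolding ex_edges_eq by (rule Int_absorb1[symmetric])
  also have "\<dots> = (if {w1, f1} \<in> M then {{w1, f1}} else {}) \<union> (if {w1, f3} \<in> M then {{w1, f3}} else {})
     \<union> (if {w2, f1} \<in> M then {{w2, f1}} else {}) \<union> (if {w2, f2} \<in> M then {{w2, f2}} else {})
     \<union> (if {w3, f3} \<in> M then {{w3, f3}} else {})"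
    by (simp only: Int_insert_left Int_empty_left) simp
  finally have M_eq: "M = \<dots>" .
  have "\<not> ({w1, f1} \<in> M \<and> {w1, f3} \<in> M)" "\<not> ({w1, f1} \<in> M \<and> {w2, f1} \<in> M)"
       "\<not> ({w1, f3} \<in> M \<and> {w3, f3} \<in> M)" "\<not> ({w2, f1} \<in> M \<and> {w2, f2} \<in> M)"
    using disjoint by (auto simp: doubleton_eq_iff)
  then show ?thesis
    unfolding ex_matchings_def
    by (subst M_eq, cases "{w1, f1} \<in> M"; cases "{w1, f3} \<in> M"; cases "{w2, f1} \<in> M";
        cases "{w2, f2} \<in> M"; cases "{w3, f3} \<in> M"; simp add: insert_commute)
qed

lemma is_matching_iff_ex_matchings:
  assumes "Ed I = ex_edges"
  shows "is_matching I M \<longleftrightarrow> M \<in> ex_matchings"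
proof
  show "M \<in> ex_matchings" if "is_matching I M"
    using matching_in_ex_matchings[OF assms that] .
  show "is_matching I M" if "M \<in> ex_matchings"
    using that unfolding ex_matchings_def
    by (elim insertE emptyE; simp add: assms is_matching_def ex_edges_eq doubleton_eq_iff)
qed

lemma sum_agents:
  "(\<Sum>x\<in>{w1, w2, w3} \<union> {f1, f2, f3}. g x) = g w1 + g w2 + g w3 + g f1 + g f2 + g f3"
  by (simp add: ac_simps)

lemmas phi_simps = phi_def vote_def prefers_def matched_def partner_def doubleton_eq_iff
  IA_def IB_def sum_agents

lemma phi_M_robust_nonneg:
  "\<forall>M'\<in>ex_matchings. phi IA M_robust M' \<ge> 0 \<and> phi IB M_robust M' \<ge> 0"
  unfolding ex_matchings_def M_robust_def by (simp add: phi_simps)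

lemma popular_M_robust: "popular IA M_robust" "popular IB M_robust"
  using phi_M_robust_nonneg
  by (auto simp: popular_def is_matching_iff_ex_matchings IA_def IB_def ex_matchings_def M_robust_def)

lemma rival_matchings:
  "phi IA {} {{w1, f1}} < 0"
  "phi IB {{w1, f1}} {{w1, f3}} < 0"
  "phi IA {{w1, f3}} {{w1, f1}} < 0"
  "phi IA {{w2, f1}} {{w1, f1}, {w3, f3}} < 0"
  "phi IA {{w2, f2}} {{w2, f1}} < 0"
  "phi IA {{w3, f3}} {{w1, f3}} < 0"
  "phi IA {{w1, f1}, {w2, f2}} {{w1, f3}, {w2, f1}} < 0"
  "phi IA {{w1, f1}, {w3, f3}} {{w1, f3}, {w2, f1}} < 0"
  "phi IA {{w1, f3}, {w2, f2}} {{w1, f1}, {w2, f2}} < 0"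
  "phi IA {{w2, f1}, {w3, f3}} {{w1, f3}, {w2, f1}} < 0"
  "phi IA {{w2, f2}, {w3, f3}} {{w1, f3}, {w2, f1}} < 0"
  "phi IB {{w1, f1}, {w2, f2}, {w3, f3}} {{w1, f3}, {w2, f1}} < 0"
  by (simp_all add: phi_simps)

lemma robust_popular_eq_M_robust:
  assumes "popular IA M" "popular IB M"
  shows "M = M_robust"
proof -
  have M: "M \<in> ex_matchings"
    and nonneg_A: "\<And>M'. M' \<in> ex_matchings \<Longrightarrow> phi IA M M' \<ge> 0"
    and nonneg_B: "\<And>M'. M' \<in> ex_matchings \<Longrightarrow> phi IB M M' \<ge> 0"
    using assms by (auto simp: popular_def is_matching_iff_ex_matchings IA_def IB_def)
  have rivals: "{{w1, f1}} \<in> ex_matchings" "{{w1, f3}} \<in> ex_matchings" "{{w2, f1}} \<in> ex_matchings"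
    "{{w1, f1}, {w2, f2}} \<in> ex_matchings" "{{w1, f1}, {w3, f3}} \<in> ex_matchings"
    "{{w1, f3}, {w2, f1}} \<in> ex_matchings"
    by (simp_all add: ex_matchings_def)
  from M show ?thesis
    using rivals[THEN nonneg_A] rivals[THEN nonneg_B] rival_matchings
    unfolding ex_matchings_def M_robust_def
    by (elim insertE emptyE; simp)
qed

lemma not_dominant_M_robust: "\<not> dominant IA M_robust"
proof -
  have "is_matching IA M_perfect"
    by (simp add: is_matching_iff_ex_matchings IA_def ex_matchings_def M_perfect_def)
  moreover have "card M_robust < card M_perfect"
    by (simp add: M_robust_def M_perfect_def doubleton_eq_iff)
  moreover have "phi IA M_robust M_perfect = 0"
    by (simp add: M_robust_def M_perfect_def phi_simps)
  ultimately show ?thesis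
    unfolding dominant_def by force
qed

lemma matp_instance_IA_IB: "matp_instance IA" "matp_instance IB"
  by (auto simp: matp_instance_def IA_def IB_def ex_edges_eq doubleton_eq_iff
      neighbors_def strict_linear_on_def)

theorem mainTheorem14:
  shows "matp_instance IA \<and> matp_instance IB
    \<and> Wk IA = Wk IB \<and> Fm IA = Fm IB \<and> Ed IA = Ed IB
    \<and> (\<forall>x. x \<noteq> w1 \<longrightarrow> pref IA x = pref IB x)
    \<and> pref IB w1 = (\<lambda>a b. pref IA w1 b a)
    \<and> {M. robust_popular IA IB M} = {{{w1, f3}, {w2, f1}}}
    \<and> \<not> (\<exists>M. robust_dominant IA IB M)"
proof -
  have same_prefs: "\<forall>x. x \<noteq> w1 \<longrightarrow> pref IA x = pref IB x"
  proof (intro allI impI)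
    fix x :: agent
    assume "x \<noteq> w1"
    then show "pref IA x = pref IB x"
      by (cases x) (auto simp: IA_def IB_def)
  qed
  have swapped_pref: "pref IB w1 = (\<lambda>a b. pref IA w1 b a)"
    by (intro ext) (auto simp: IA_def IB_def)
  have robust_popular: "{M. robust_popular IA IB M} = {M_robust}"
    using popular_M_robust robust_popular_eq_M_robust by (auto simp: robust_popular_def)
  have "\<not> (\<exists>M. robust_dominant IA IB M)"
    using not_dominant_M_robust robust_popular_eq_M_robust
    by (auto simp: robust_dominant_def dominant_def)
  moreover have "Wk IA = Wk IB" "Fm IA = Fm IB" "Ed IA = Ed IB"
    by (simp_all add: IA_def IB_def)
  ultimately show ?thesis
    unfolding M_robust_def[symmetric]
    using matp_instance_IA_IB same_prefs swapped_pref robust_popular by blast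
qed

end
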